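(* Let $K>0$ and let $G$ be a probability distribution on $\mathbb{R}$ such that there is a measure $\nu_1$ dominating $G$ with $\frac{dG}{d\nu_1}(x)\le C$ for all $x$, for some $C>0$. Let $x_1,x_2,\ldots$ and $y_1,y_2,\ldots$ be sequences of observations, $\mathbb{D}_{n,m}=\{x_1,\ldots,x_n,y_1,\ldots,y_m\}$, and let $(P_1^*,P_2^* )$ be distributed according to the posterior given $\mathbb{D}_{n,m}$ under a priori independent $DP(K,G)$ priors, with posterior expectation $E_{\mathbb{D}_{n,m}}$. Let $d$ be the Kolmogorov distance, $\mathrm{WIKS}(\mathbb{D}_{n,m})=E_{\mathbb{D}_{n,m}}[d(P_1^*,P_2^* )]$ (uniform weight $W(\varepsilon)=\varepsilon$ on $[0,1]$), and $$Z^{n,m}(\mathbb{D}_{n,m})=\sup_{t\in\mathbb{R}}\Big|\frac{1}{K+n}\sum_{i=1}^n I_{(-\infty,t]}(x_i)-\frac{1}{K+m}\sum_{j=1}^m I_{(-\infty,t]}(y_j)\Big|.$$ Then $$\big|\mathrm{WIKS}(\mathbb{D}_{n,m})-Z^{n,m}(\mathbb{D}_{n,m})\big|\xrightarrow{n,m\to\infty}0.$$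
   Context: $DP(K,G)$ is the Dirichlet process with concentration $K$ and base distribution $G$. Given $(P_1,P_2)$, the $x_i$ are i.i.d. $P_1$ and the $y_j$ i.i.d. $P_2$. The posterior makes $P_1^*,P_2^*$ independent with $P_1^*\sim DP\big(K+n,\frac{KG+\sum_{i\le n}\delta_{x_i}}{K+n}\big)$ and $P_2^*\sim DP\big(K+m,\frac{KG+\sum_{j\le m}\delta_{y_j}}{K+m}\big)$. The Kolmogorov distance is $d(P,Q)=\sup_{t\in\mathbb{R}}|P((-\infty,t])-Q((-\infty,t])|$. The WIKS index with cumulative weight $W$ is $E_{\mathbb{D}_{n,m}}[W(d(P_1^*,P_2^* ))]$. *)

theory Defs
  imports "HOL-Probability.Probability"
begin

definition gamma_measure :: "real \<Rightarrow> real measure" where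
  "gamma_measure a =
     (if a = 0 then return borel 0
      else density lborel (\<lambda>x. ennreal (if 0 < x then x powr (a - 1) * exp (- x) / Gamma a else 0)))"

text \<open>Dirichlet distribution on k coordinates with parameters a 0, ..., a (k-1) (allowed to be 0,
  giving degenerate coordinates), as normalised independent Gamma variables.\<close>
definition dirichlet :: "nat \<Rightarrow> (nat \<Rightarrow> real) \<Rightarrow> (nat \<Rightarrow> real) measure" where
  "dirichlet k a =
     distr (PiM {..<k} (\<lambda>i. gamma_measure (a i))) (PiM {..<k} (\<lambda>_. borel))
       (\<lambda>g. \<lambda>i\<in>{..<k}. g i / (\<Sum>j<k. g j))"

text \<open>Ferguson's definition: P is a random probability measure on the real line (a random
  variable with values in the space of Borel probability measures) distributed as DP(alpha, H):
  for every finite measurable partition A 0, ..., A (k-1) of the real line, the vector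
  (P(A 0), ..., P(A (k-1))) is Dirichlet(alpha H(A 0), ..., alpha H(A (k-1))).\<close>
definition dirichlet_process ::
  "'a measure \<Rightarrow> ('a \<Rightarrow> real measure) \<Rightarrow> real \<Rightarrow> (real set \<Rightarrow> real) \<Rightarrow> bool" where
  "dirichlet_process M P alpha H \<longleftrightarrow>
     P \<in> measurable M (prob_algebra borel) \<and>
     (\<forall>k (A :: nat \<Rightarrow> real set). k \<ge> 1 \<longrightarrow> (\<forall>i<k. A i \<in> sets borel) \<longrightarrow>
        disjoint_family_on A {..<k} \<longrightarrow> (\<Union>i<k. A i) = UNIV \<longrightarrow>
        distr M (PiM {..<k} (\<lambda>_. borel)) (\<lambda>\<omega>. \<lambda>i\<in>{..<k}. measure (P \<omega>) (A i))
          = dirichlet k (\<lambda>i. alpha * H (A i)))"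

definition post_base :: "real \<Rightarrow> real measure \<Rightarrow> (nat \<Rightarrow> real) \<Rightarrow> nat \<Rightarrow> real set \<Rightarrow> real" where
  "post_base K G x n A = (K * measure G A + real (card {i \<in> {..<n}. x i \<in> A})) / (K + real n)"

definition kolmogorov_dist :: "real measure \<Rightarrow> real measure \<Rightarrow> real" where
  "kolmogorov_dist P Q = (SUP t. \<bar>measure P {..t} - measure Q {..t}\<bar>)"

definition Z_stat :: "real \<Rightarrow> (nat \<Rightarrow> real) \<Rightarrow> (nat \<Rightarrow> real) \<Rightarrow> nat \<Rightarrow> nat \<Rightarrow> real" where
  "Z_stat K x y n m =
     (SUP t. \<bar>(\<Sum>i<n. indicator {..t} (x i)) / (K + real n)
              - (\<Sum>j<m. indicator {..t} (y j)) / (K + real m)\<bar>)"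

end

theory Submission
  imports Defs
begin

text \<open>
  Given the data, \<open>P1\<close> is a Dirichlet process with concentration \<open>\<alpha> = K + n\<close> whose base
  measure \<open>H = (K G + \<Sum>i<n. \<delta>(x i)) / (K + n)\<close> has distribution function within \<open>K / \<alpha>\<close> of
  the weighted empirical distribution function occurring in \<open>Z_stat\<close>; by the triangle
  inequality for the Kolmogorov distance it therefore suffices that \<open>E d(P1, H) \<rightarrow> 0\<close>,
  uniformly in the data. For a Borel set \<open>A\<close>, \<open>P1(A)\<close> is distributed as \<open>g0 / (g0 + g1)\<close> with
  independent Gamma variables of means and variances \<open>\<alpha> H(A)\<close> and \<open>\<alpha> H(-A)\<close>, and a
  Chebyshev-type estimate gives \<open>E |P1(A) - H(A)| \<le> 1 / (\<epsilon>\<^sup>2 \<alpha>) + 2 \<epsilon>\<close>. Bracketing the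
  distribution function of \<open>H\<close> by its quantiles at the levels \<open>j / k\<close> bounds \<open>d(P1, H)\<close> by
  \<open>1 / k\<close> plus the deviations on \<open>2 k\<close> rays, and choosing \<open>k\<close>, then \<open>\<epsilon>\<close>, then \<open>\<alpha>\<close> makes
  the expectation small.
\<close>

section \<open>Gamma distributions\<close>

lemma sets_gamma_measure [measurable_cong, simp]: "sets (gamma_measure a) = sets borel"
  by (simp add: gamma_measure_def)

lemma AE_gamma_measure_0: "AE t in gamma_measure 0. t = 0"
  unfolding gamma_measure_def by (simp add: AE_return)

lemma AE_gamma_measure_nonneg: "AE t in gamma_measure a. 0 \<le> t"
proof (cases "a = 0")
  case True
  show ?thesis using AE_gamma_measure_0 unfolding True by eventually_elim simp
next
  case False
  then show ?thesis unfolding gamma_measure_def by (auto simp: AE_density intro!: AE_I2 split: if_splits)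
qed

lemma nn_integral_gamma_measure_power:
  assumes "a > 0"
  shows "(\<integral>\<^sup>+t. ennreal (t ^ k) \<partial>gamma_measure a) = ennreal (Gamma (a + real k) / Gamma a)"
proof -
  have "(\<integral>\<^sup>+t. ennreal (t ^ k) \<partial>gamma_measure a) =
     (\<integral>\<^sup>+t. ennreal (if 0 < t then t powr (a - 1) * exp (- t) / Gamma a else 0) * ennreal (t ^ k) \<partial>lborel)"
    using assms unfolding gamma_measure_def by (simp add: nn_integral_density)
  also have "\<dots> = (\<integral>\<^sup>+t. ennreal (indicator {0..} t * t powr (a + real k - 1) / exp t) / ennreal (Gamma a) \<partial>lborel)"
  proof (intro nn_integral_cong)
    fix t :: real
    show "ennreal (if 0 < t then t powr (a - 1) * exp (- t) / Gamma a else 0) * ennreal (t ^ k) =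
         ennreal (indicator {0..} t * t powr (a + real k - 1) / exp t) / ennreal (Gamma a)"
    proof (cases "0 < t")
      case True
      have "t powr (a + real k - 1) = t powr (a - 1) * t ^ k"
        using True by (simp add: powr_add[symmetric] powr_realpow[symmetric] algebra_simps)
      then show ?thesis using True assms
        by (simp add: ennreal_mult''[symmetric] divide_ennreal exp_minus field_simps)
    next
      case False
      then show ?thesis by (cases "t = 0") (auto simp: indicator_def)
    qed
  qed
  also have "\<dots> = ennreal (Gamma (a + real k)) / ennreal (Gamma a)"
    using assms by (simp add: nn_integral_divide Gamma_conv_nn_integral_real)
  also have "\<dots> = ennreal (Gamma (a + real k) / Gamma a)"
    using assms by (simp add: divide_ennreal add_pos_nonneg)
  finally show ?thesis .
qed

lemma has_bochner_integral_gamma_measure_power: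
  assumes "a > 0"
  shows "has_bochner_integral (gamma_measure a) (\<lambda>t. t ^ k) (Gamma (a + real k) / Gamma a)"
proof (rule has_bochner_integral_nn_integral)
  show "AE t in gamma_measure a. 0 \<le> t ^ k"
    using AE_gamma_measure_nonneg by eventually_elim simp
  show "0 \<le> Gamma (a + real k) / Gamma a"
    using assms by (simp add: less_imp_le add_pos_nonneg)
qed (use assms nn_integral_gamma_measure_power in simp_all)

lemma prob_space_gamma_measure:
  assumes "a \<ge> 0"
  shows "prob_space (gamma_measure a)"
proof (cases "a = 0")
  case True
  then show ?thesis by (simp add: gamma_measure_def prob_space_return)
next
  case False
  then have "a > 0" using assms by simp
  moreover from this have "Gamma a \<noteq> 0" by (metis Gamma_real_pos less_irrefl)
  ultimately have "emeasure (gamma_measure a) (space (gamma_measure a)) = 1"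
    using nn_integral_gamma_measure_power[of a 0] by (simp add: nn_integral_const)
  then show ?thesis by (rule prob_spaceI)
qed

lemma has_bochner_integral_gamma_measure_variance:
  assumes "a \<ge> 0"
  shows "has_bochner_integral (gamma_measure a) (\<lambda>t. (t - a)\<^sup>2) a"
proof (cases "a = 0")
  case True
  have "AE t in gamma_measure a. 0 = (t - a)\<^sup>2"
    using AE_gamma_measure_0 unfolding True by eventually_elim simp
  then show ?thesis
    using True by (subst has_bochner_integral_cong_AE[symmetric]) auto
next
  case False
  then have a: "a > 0" using assms by simp
  have not_npos: "b \<notin> \<int>\<^sub>\<le>\<^sub>0" if "b > 0" for b :: real
    using that nonpos_Ints_nonpos by force
  have Gamma_nz: "Gamma a \<noteq> 0" using a by (metis Gamma_real_pos less_irrefl)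
  have Gamma1: "Gamma (a + 1) = a * Gamma a"
    using Gamma_plus1[of a] not_npos a by simp
  have Gamma2: "Gamma (a + 2) = (a + 1) * (a * Gamma a)"
    using Gamma_plus1[of "a + 1"] Gamma1 not_npos[of "a + 1"] a by (simp add: add.assoc)
  have mean: "has_bochner_integral (gamma_measure a) (\<lambda>t. t) a"
    using has_bochner_integral_gamma_measure_power[OF a, of 1] Gamma1 Gamma_nz by simp
  have "Gamma (a + real 2) / Gamma a = a * (a + 1)"
    using Gamma2 Gamma_nz by (simp add: field_simps)
  then have second: "has_bochner_integral (gamma_measure a) (\<lambda>t. t\<^sup>2) (a * (a + 1))"
    using has_bochner_integral_gamma_measure_power[OF a, of 2] by simp
  interpret prob_space "gamma_measure a" using assms by (rule prob_space_gamma_measure)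
  have "has_bochner_integral (gamma_measure a) (\<lambda>t. t\<^sup>2 - 2 * a * t + a\<^sup>2) (a * (a + 1) - 2 * a * a + a\<^sup>2)"
    by (intro has_bochner_integral_add has_bochner_integral_diff has_bochner_integral_mult_right
        mean second) (simp add: has_bochner_integral_iff prob_space)
  then show ?thesis by (simp add: power2_diff algebra_simps power2_eq_square)
qed

section \<open>Dirichlet distributions and processes\<close>

lemma distr_PiM_gamma_measure_component:
  fixes k :: nat
  assumes "\<And>i. i < k \<Longrightarrow> a i \<ge> 0" and "i < k"
  shows "distr (PiM {..<k} (\<lambda>i. gamma_measure (a i))) (gamma_measure (a i)) (\<lambda>g. g i) =
    gamma_measure (a i)"
  using assms by (intro distr_PiM_component) (auto intro: prob_space_gamma_measure)

lemma has_bochner_integral_PiM_gamma_variance: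
  fixes k :: nat
  assumes a: "\<And>i. i < k \<Longrightarrow> a i \<ge> 0" and i: "i < k"
  shows "has_bochner_integral (PiM {..<k} (\<lambda>i. gamma_measure (a i))) (\<lambda>g. (g i - a i)\<^sup>2) (a i)"
proof -
  have "has_bochner_integral (distr (PiM {..<k} (\<lambda>i. gamma_measure (a i))) (gamma_measure (a i))
      (\<lambda>g. g i)) (\<lambda>t. (t - a i)\<^sup>2) (a i)"
    using a i by (simp add: distr_PiM_gamma_measure_component has_bochner_integral_gamma_measure_variance)
  then show ?thesis
    using i by (simp add: has_bochner_integral_iff integrable_distr_eq integral_distr)
qed

lemma AE_PiM_gamma_nonneg:
  fixes k :: nat
  assumes "\<And>i. i < k \<Longrightarrow> a i \<ge> 0" and i: "i < k"
  shows "AE g in PiM {..<k} (\<lambda>i. gamma_measure (a i)). 0 \<le> g i"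
proof -
  have marginal: "distr (PiM {..<k} (\<lambda>i. gamma_measure (a i))) (gamma_measure (a i)) (\<lambda>g. g i) =
      gamma_measure (a i)"
    using assms by (rule distr_PiM_gamma_measure_component)
  have "AE t in distr (PiM {..<k} (\<lambda>i. gamma_measure (a i))) (gamma_measure (a i)) (\<lambda>g. g i). 0 \<le> t"
    unfolding marginal by (rule AE_gamma_measure_nonneg)
  then show ?thesis
    using i by (subst (asm) AE_distr_iff) auto
qed

text \<open>If a coordinate deviates from its mean by at least \<open>\<epsilon> \<alpha>\<close>, the first summand on the right is
  at least 1, which bounds the left-hand side; otherwise the normalising sum is at least \<open>\<alpha> / 2\<close>.\<close>
lemma ratio_deviation_le:
  fixes g0 g1 a0 a1 \<alpha> \<epsilon> :: real
  assumes "g0 \<ge> 0" "g1 \<ge> 0" "a0 \<ge> 0" "a1 \<ge> 0" and sum: "a0 + a1 = \<alpha>" and "\<alpha> > 0"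
    and "0 < \<epsilon>" "\<epsilon> \<le> 1/4"
  shows "\<bar>g0 / (g0 + g1) - a0 / \<alpha>\<bar> \<le> ((g0 - a0)\<^sup>2 + (g1 - a1)\<^sup>2) / (\<epsilon> * \<alpha>)\<^sup>2 + 2 * \<epsilon>"
proof (cases "\<bar>g0 - a0\<bar> < \<epsilon> * \<alpha> \<and> \<bar>g1 - a1\<bar> < \<epsilon> * \<alpha>")
  case True
  define S where "S = g0 + g1"
  have "\<epsilon> * \<alpha> \<le> \<alpha> / 4" using assms by simp
  then have S: "\<alpha> / 2 \<le> S" using True sum unfolding S_def by (simp add: abs_less_iff)
  then have S_pos: "S > 0" using assms by simp
  have "\<bar>a1 * (g0 - a0) - a0 * (g1 - a1)\<bar> \<le> a1 * (\<epsilon> * \<alpha>) + a0 * (\<epsilon> * \<alpha>)"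
    using True assms
    by (intro order.trans[OF abs_triangle_ineq4] add_mono) (auto simp: abs_mult mult_left_mono)
  also have "\<dots> = \<epsilon> * \<alpha> * \<alpha>" by (simp add: algebra_simps flip: sum)
  finally have num: "\<bar>a1 * (g0 - a0) - a0 * (g1 - a1)\<bar> \<le> \<epsilon> * \<alpha> * \<alpha>" .
  have "g0 / S - a0 / \<alpha> = (a1 * (g0 - a0) - a0 * (g1 - a1)) / (\<alpha> * S)"
    using S_pos assms unfolding S_def by (simp add: field_simps) (simp add: algebra_simps flip: sum)
  then have "\<bar>g0 / S - a0 / \<alpha>\<bar> = \<bar>a1 * (g0 - a0) - a0 * (g1 - a1)\<bar> / (\<alpha> * S)"
    using S_pos assms by (simp add: abs_div)
  also have "\<dots> \<le> \<epsilon> * \<alpha> * \<alpha> / (\<alpha> * (\<alpha> / 2))"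
    using S S_pos assms by (intro frac_le num mult_left_mono) auto
  also have "\<dots> = 2 * \<epsilon>" using assms by simp
  finally have "\<bar>g0 / (g0 + g1) - a0 / \<alpha>\<bar> \<le> 2 * \<epsilon>" unfolding S_def .
  moreover have "0 \<le> ((g0 - a0)\<^sup>2 + (g1 - a1)\<^sup>2) / (\<epsilon> * \<alpha>)\<^sup>2" by simp
  ultimately show ?thesis by linarith
next
  case False
  have "0 \<le> g0 / (g0 + g1)" "g0 / (g0 + g1) \<le> 1" "0 \<le> a0 / \<alpha>" "a0 / \<alpha> \<le> 1"
    using assms by (auto simp: divide_le_eq_1)
  then have "\<bar>g0 / (g0 + g1) - a0 / \<alpha>\<bar> \<le> 1" by linarith
  moreover have "(\<epsilon> * \<alpha>)\<^sup>2 \<le> (g0 - a0)\<^sup>2 + (g1 - a1)\<^sup>2"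
  proof -
    have "\<bar>\<epsilon> * \<alpha>\<bar> \<le> \<bar>g0 - a0\<bar> \<or> \<bar>\<epsilon> * \<alpha>\<bar> \<le> \<bar>g1 - a1\<bar>"
      using False assms by auto
    then have "(\<epsilon> * \<alpha>)\<^sup>2 \<le> (g0 - a0)\<^sup>2 \<or> (\<epsilon> * \<alpha>)\<^sup>2 \<le> (g1 - a1)\<^sup>2"
      by (simp add: abs_le_square_iff)
    then show ?thesis by (meson add_increasing add_increasing2 zero_le_power2)
  qed
  then have "1 \<le> ((g0 - a0)\<^sup>2 + (g1 - a1)\<^sup>2) / (\<epsilon> * \<alpha>)\<^sup>2"
    using assms by (simp add: le_divide_eq_1)
  ultimately show ?thesis using assms by linarith
qed

lemma PiM_gamma_ratio_expected_deviation:
  fixes a :: "nat \<Rightarrow> real" and \<alpha> \<epsilon> :: real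
  defines "\<Gamma> \<equiv> PiM {..<2} (\<lambda>i. gamma_measure (a i))"
  assumes a: "a 0 \<ge> 0" "a 1 \<ge> 0" "a 0 + a 1 = \<alpha>" and "\<alpha> > 0" and \<epsilon>: "0 < \<epsilon>" "\<epsilon> \<le> 1/4"
  shows "integrable \<Gamma> (\<lambda>g. \<bar>g 0 / (g 0 + g 1) - a 0 / \<alpha>\<bar>)"
    and "(\<integral>g. \<bar>g 0 / (g 0 + g 1) - a 0 / \<alpha>\<bar> \<partial>\<Gamma>) \<le> 1 / (\<epsilon>\<^sup>2 * \<alpha>) + 2 * \<epsilon>"
proof -
  define f where "f g = \<bar>g 0 / (g 0 + g 1) - a 0 / \<alpha>\<bar>" for g :: "nat \<Rightarrow> real"
  define B where "B g = ((g 0 - a 0)\<^sup>2 + (g 1 - a 1)\<^sup>2) / (\<epsilon> * \<alpha>)\<^sup>2 + 2 * \<epsilon>" for g :: "nat \<Rightarrow> real"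
  have a_nonneg: "a i \<ge> 0" if "i < 2" for i
    using a that less_2_cases by auto
  interpret \<Gamma>: prob_space \<Gamma>
    unfolding \<Gamma>_def using a_nonneg by (intro prob_space_PiM prob_space_gamma_measure) simp
  have nonneg: "AE g in \<Gamma>. 0 \<le> g 0 \<and> 0 \<le> g 1"
    using AE_PiM_gamma_nonneg[of 2 a 0] AE_PiM_gamma_nonneg[of 2 a 1] a_nonneg unfolding \<Gamma>_def by auto
  have f_le_B: "AE g in \<Gamma>. f g \<le> B g"
    using nonneg by eventually_elim (use a assms in \<open>auto simp: f_def B_def intro: ratio_deviation_le\<close>)
  have mean_ratio: "0 \<le> a 0 / \<alpha>" "a 0 / \<alpha> \<le> 1" using a assms by auto
  have "AE g in \<Gamma>. norm (f g) \<le> 1"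
    using nonneg
  proof eventually_elim
    case (elim g)
    then have "0 \<le> g 0 / (g 0 + g 1)" "g 0 / (g 0 + g 1) \<le> 1" by (auto simp: divide_le_eq_1)
    with mean_ratio show ?case by (auto simp: f_def abs_le_iff)
  qed
  moreover have "f \<in> borel_measurable \<Gamma>" unfolding f_def \<Gamma>_def by measurable
  ultimately show f_integrable: "integrable \<Gamma> f"
    by (rule \<Gamma>.integrable_const_bound)
  have variance: "has_bochner_integral \<Gamma> (\<lambda>g. (g i - a i)\<^sup>2) (a i)" if "i < 2" for i
    using has_bochner_integral_PiM_gamma_variance[of 2 a i] a_nonneg that unfolding \<Gamma>_def by blast
  have "has_bochner_integral \<Gamma> (\<lambda>_. 2 * \<epsilon>) (2 * \<epsilon>)"
    by (simp add: has_bochner_integral_iff \<Gamma>.prob_space)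
  then have "has_bochner_integral \<Gamma> B ((a 0 + a 1) / (\<epsilon> * \<alpha>)\<^sup>2 + 2 * \<epsilon>)"
    unfolding B_def by (intro has_bochner_integral_add has_bochner_integral_divide_zero variance) simp_all
  moreover have "(a 0 + a 1) / (\<epsilon> * \<alpha>)\<^sup>2 + 2 * \<epsilon> = 1 / (\<epsilon>\<^sup>2 * \<alpha>) + 2 * \<epsilon>"
    using a assms by (simp add: power2_eq_square field_simps)
  ultimately show "integral\<^sup>L \<Gamma> f \<le> 1 / (\<epsilon>\<^sup>2 * \<alpha>) + 2 * \<epsilon>"
    using integral_mono_AE[OF f_integrable _ f_le_B] by (simp add: has_bochner_integral_iff)
qed

lemma dirichlet_2_expected_deviation:
  fixes a :: "nat \<Rightarrow> real" and \<alpha> \<epsilon> :: real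
  assumes "a 0 \<ge> 0" "a 1 \<ge> 0" "a 0 + a 1 = \<alpha>" and "\<alpha> > 0" and "0 < \<epsilon>" "\<epsilon> \<le> 1/4"
  shows "integrable (dirichlet 2 a) (\<lambda>z. \<bar>z 0 - a 0 / \<alpha>\<bar>)"
    and "(\<integral>z. \<bar>z 0 - a 0 / \<alpha>\<bar> \<partial>dirichlet 2 a) \<le> 1 / (\<epsilon>\<^sup>2 * \<alpha>) + 2 * \<epsilon>"
proof -
  let ?\<Gamma> = "PiM {..<2} (\<lambda>i. gamma_measure (a i))"
  define \<psi> where "\<psi> = (\<lambda>g::nat\<Rightarrow>real. \<lambda>i\<in>{..<2::nat}. g i / (\<Sum>j<2. g j))"
  have \<psi>_measurable: "\<psi> \<in> ?\<Gamma> \<rightarrow>\<^sub>M PiM {..<2} (\<lambda>_. borel)" unfolding \<psi>_def by measurable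
  have dev_measurable: "(\<lambda>z::nat\<Rightarrow>real. \<bar>z 0 - a 0 / \<alpha>\<bar>) \<in> borel_measurable (PiM {..<2} (\<lambda>_. borel))"
    by measurable
  have dev_\<psi>: "\<bar>\<psi> g 0 - a 0 / \<alpha>\<bar> = \<bar>g 0 / (g 0 + g 1) - a 0 / \<alpha>\<bar>" for g
    unfolding \<psi>_def by (simp add: numeral_2_eq_2)
  have "dirichlet 2 a = distr ?\<Gamma> (PiM {..<2} (\<lambda>_. borel)) \<psi>"
    unfolding dirichlet_def \<psi>_def ..
  then show "integrable (dirichlet 2 a) (\<lambda>z. \<bar>z 0 - a 0 / \<alpha>\<bar>)"
    and "(\<integral>z. \<bar>z 0 - a 0 / \<alpha>\<bar> \<partial>dirichlet 2 a) \<le> 1 / (\<epsilon>\<^sup>2 * \<alpha>) + 2 * \<epsilon>"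
    using PiM_gamma_ratio_expected_deviation[OF assms]
    by (simp_all add: integrable_distr_eq[OF \<psi>_measurable dev_measurable]
        integral_distr[OF \<psi>_measurable dev_measurable] dev_\<psi>)
qed

lemma dirichlet_process_measurable:
  "dirichlet_process M P \<alpha> H \<Longrightarrow> P \<in> M \<rightarrow>\<^sub>M prob_algebra borel"
  by (simp add: dirichlet_process_def)

lemma dirichlet_process_measure_measurable:
  assumes "dirichlet_process M P \<alpha> H" and "A \<in> sets borel"
  shows "(\<lambda>\<omega>. measure (P \<omega>) A) \<in> borel_measurable M"
  using measurable_compose[OF dirichlet_process_measurable[OF assms(1)]
      measurable_measure_prob_algebra[OF assms(2)]] by simp

lemma dirichlet_process_binary_partition:
  assumes DP: "dirichlet_process M P \<alpha> H" and A: "A \<in> sets borel"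
  defines "B \<equiv> \<lambda>i::nat. if i = 0 then A else - A"
  shows "distr M (PiM {..<2} (\<lambda>_. borel)) (\<lambda>\<omega>. \<lambda>i\<in>{..<2}. measure (P \<omega>) (B i)) =
    dirichlet 2 (\<lambda>i. \<alpha> * H (B i))"
proof -
  have "(\<Union>i<2. B i) = UNIV"
    unfolding B_def by (auto simp: lessThan_nat_numeral)
  moreover have "disjoint_family_on B {..<2}"
    unfolding B_def disjoint_family_on_def by auto
  ultimately show ?thesis
    using DP A unfolding dirichlet_process_def B_def by auto
qed

lemma dirichlet_process_expected_deviation:
  assumes DP: "dirichlet_process M P \<alpha> H" and "\<alpha> > 0" and A: "A \<in> sets borel"
    and H: "H A \<ge> 0" "H (- A) \<ge> 0" "H A + H (- A) = 1" and \<epsilon>: "0 < \<epsilon>" "\<epsilon> \<le> 1/4"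
  shows "integrable M (\<lambda>\<omega>. \<bar>measure (P \<omega>) A - H A\<bar>)"
    and "(\<integral>\<omega>. \<bar>measure (P \<omega>) A - H A\<bar> \<partial>M) \<le> 1 / (\<epsilon>\<^sup>2 * \<alpha>) + 2 * \<epsilon>"
proof -
  define B where "B = (\<lambda>i::nat. if i = 0 then A else - A)"
  define \<phi> where "\<phi> = (\<lambda>\<omega>. \<lambda>i\<in>{..<2::nat}. measure (P \<omega>) (B i))"
  define a where "a = (\<lambda>i. \<alpha> * H (B i))"
  have \<phi>_measurable: "\<phi> \<in> M \<rightarrow>\<^sub>M PiM {..<2} (\<lambda>_. borel)"
    unfolding \<phi>_def using A
    by (intro measurable_restrict dirichlet_process_measure_measurable[OF DP]) (auto simp: B_def)
  have dev_measurable: "(\<lambda>z::nat\<Rightarrow>real. \<bar>z 0 - a 0 / \<alpha>\<bar>) \<in> borel_measurable (PiM {..<2} (\<lambda>_. borel))"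
    by measurable
  have distr_\<phi>: "distr M (PiM {..<2} (\<lambda>_. borel)) \<phi> = dirichlet 2 a"
    unfolding \<phi>_def a_def B_def by (rule dirichlet_process_binary_partition[OF DP A])
  have dev_\<phi>: "\<bar>\<phi> \<omega> 0 - a 0 / \<alpha>\<bar> = \<bar>measure (P \<omega>) A - H A\<bar>" for \<omega>
    using assms by (simp add: \<phi>_def a_def B_def)
  have "a 0 \<ge> 0" "a 1 \<ge> 0" "a 0 + a 1 = \<alpha>"
    using assms by (simp_all add: a_def B_def flip: distrib_left)
  note dirichlet = dirichlet_2_expected_deviation[OF this \<open>\<alpha> > 0\<close> \<epsilon>]
  show "integrable M (\<lambda>\<omega>. \<bar>measure (P \<omega>) A - H A\<bar>)"
    using dirichlet(1)
    by (simp add: distr_\<phi>[symmetric] integrable_distr_eq[OF \<phi>_measurable dev_measurable] dev_\<phi>)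
  show "(\<integral>\<omega>. \<bar>measure (P \<omega>) A - H A\<bar> \<partial>M) \<le> 1 / (\<epsilon>\<^sup>2 * \<alpha>) + 2 * \<epsilon>"
    using dirichlet(2)
    by (simp add: distr_\<phi>[symmetric] integral_distr[OF \<phi>_measurable dev_measurable] dev_\<phi>)
qed

section \<open>Quantile bracketing of distribution functions\<close>

definition quantile :: "real measure \<Rightarrow> real \<Rightarrow> real" where
  "quantile M c = Inf {t. c \<le> cdf M t}"

context real_distribution
begin

lemma quantile_le_iff:
  assumes "0 < c" "c < 1"
  shows "quantile M c \<le> t \<longleftrightarrow> c \<le> cdf M t"
proof -
  define S where "S = {t. c \<le> cdf M t}"
  obtain t0 where "c < cdf M t0"
    using order_tendstoD(1)[OF cdf_lim_at_top_prob \<open>c < 1\<close>] by (auto simp: eventually_at_top_linorder)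
  then have S_ne: "S \<noteq> {}" unfolding S_def by (auto intro!: exI[of _ t0])
  obtain b where b: "cdf M b < c"
    using order_tendstoD(2)[OF cdf_lim_at_bot \<open>0 < c\<close>] by (auto simp: eventually_at_bot_linorder)
  have "b \<le> s" if "s \<in> S" for s
    using that b cdf_nondecreasing[of s b] unfolding S_def by (cases "s \<le> b") auto
  then have S_bdd: "bdd_below S" by (rule bdd_belowI)
  have "c \<le> cdf M (Inf S)"
  proof (rule tendsto_lowerbound[OF cdf_is_right_cont[unfolded continuous_within]])
    have "c \<le> cdf M s" if s: "Inf S < s" for s
    proof -
      obtain s' where "s' \<in> S" "s' < s" using cInf_less_iff[OF S_ne S_bdd, of s] s by blast
      then show ?thesis using cdf_nondecreasing[of s' s] unfolding S_def by simp
    qed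
    then show "\<forall>\<^sub>F s in at_right (Inf S). c \<le> cdf M s"
      using eventually_at_right_less[of "Inf S"] by (auto elim: eventually_mono)
  qed simp
  then show ?thesis
    using cdf_nondecreasing cInf_lower[OF _ S_bdd] unfolding quantile_def S_def[symmetric]
    by (auto simp: S_def intro: order_trans)
qed

lemma measure_lessThan_quantile_le:
  assumes "0 < c" "c < 1"
  shows "measure M {..< quantile M c} \<le> c"
proof (rule tendsto_upperbound[OF cdf_at_left])
  have "cdf M s \<le> c" if "s < quantile M c" for s
    using quantile_le_iff[OF assms, of s] that by linarith
  then show "\<forall>\<^sub>F s in at_left (quantile M c). cdf M s \<le> c"
    by (auto simp: eventually_at_left_field intro!: exI[of _ "quantile M c - 1"])
qed simp

lemma cdf_le_via_quantile:
  assumes N: "real_distribution N" and c: "0 < c" "c < 1" and "cdf M t < c"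
  shows "cdf N t \<le> c + \<bar>measure N {..< quantile M c} - measure M {..< quantile M c}\<bar>"
proof -
  interpret N: real_distribution N by (rule N)
  have "t < quantile M c" using quantile_le_iff[OF c] \<open>cdf M t < c\<close> by (meson not_le)
  then have "cdf N t \<le> measure N {..< quantile M c}"
    unfolding cdf_def by (intro N.finite_measure_mono) auto
  then show ?thesis using measure_lessThan_quantile_le[OF c] by linarith
qed

lemma cdf_ge_via_quantile:
  assumes N: "real_distribution N" and c: "0 < c" "c < 1" and "c \<le> cdf M t"
  shows "c - \<bar>cdf N (quantile M c) - cdf M (quantile M c)\<bar> \<le> cdf N t"
proof -
  interpret N: real_distribution N by (rule N)
  have "quantile M c \<le> t" using quantile_le_iff[OF c] \<open>c \<le> cdf M t\<close> by simp
  then have "cdf N (quantile M c) \<le> cdf N t" by (rule N.cdf_nondecreasing)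
  moreover have "c \<le> cdf M (quantile M c)" using quantile_le_iff[OF c, of "quantile M c"] by simp
  ultimately show ?thesis by linarith
qed

end

lemma grid_point_above:
  fixes k :: nat and h :: real
  assumes "k > 0" "0 \<le> h" "h < 1 - 1 / k"
  obtains j where "j \<in> {1..<k}" "h < j / k" "j / k \<le> h + 1 / k"
proof
  define j where "j = nat \<lfloor>k * h\<rfloor> + 1"
  have "real j = \<lfloor>k * h\<rfloor> + 1" using assms by (simp add: j_def)
  then have kh: "real j - 1 \<le> k * h" "k * h < real j"
    using floor_correct[of "k * h"] by linarith+
  then show "h < j / k" "j / k \<le> h + 1 / k"
    using assms by (simp_all add: field_simps)
  have "k * h < k - 1" using assms by (simp add: field_simps)
  then show "j \<in> {1..<k}" using kh(1) by (simp add: j_def)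
qed

lemma grid_point_below:
  fixes k :: nat and h :: real
  assumes "k > 0" "1 / k < h" "h \<le> 1"
  obtains j where "j \<in> {1..<k}" "j / k \<le> h" "h \<le> j / k + 1 / k"
proof
  define j where "j = nat (\<lceil>k * h\<rceil> - 1)"
  have "1 < k * h" using assms by (simp add: field_simps)
  then have "1 < \<lceil>k * h\<rceil>" by (simp add: less_ceiling_iff)
  then have "real j = \<lceil>k * h\<rceil> - 1" by (simp add: j_def)
  then have kh: "real j < k * h" "k * h \<le> real j + 1"
    using ceiling_correct[of "k * h"] by linarith+
  then show "j / k \<le> h" "h \<le> j / k + 1 / k"
    using assms by (simp_all add: field_simps)
  have "k * h \<le> k" using assms by simp
  then have "real j < k" using kh by linarith
  moreover have "0 < real j" using kh \<open>1 < k * h\<close> by linarith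
  ultimately show "j \<in> {1..<k}" by simp
qed

lemma (in real_distribution) cdf_bracketing:
  fixes k :: nat
  assumes "k > 0"
  obtains T where "finite T" "card T \<le> k"
    "\<And>N t. real_distribution N \<Longrightarrow> \<bar>cdf N t - cdf M t\<bar> \<le> 1 / k +
      (\<Sum>s\<in>T. \<bar>cdf N s - cdf M s\<bar> + \<bar>measure N {..<s} - measure M {..<s}\<bar>)"
proof
  define T where "T = (\<lambda>j. quantile M (j / k)) ` {1..<k}"
  show "finite T" unfolding T_def by simp
  have "card T \<le> card {1..<k}" unfolding T_def by (rule card_image_le) simp
  then show "card T \<le> k" by simp
  fix N t assume N: "real_distribution N"
  interpret N: real_distribution N by (rule N)
  define E where "E = (\<Sum>s\<in>T. \<bar>cdf N s - cdf M s\<bar> + \<bar>measure N {..<s} - measure M {..<s}\<bar>)"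
  have E: "\<bar>cdf N s - cdf M s\<bar> \<le> E" "\<bar>measure N {..<s} - measure M {..<s}\<bar> \<le> E" if "s \<in> T" for s
    using member_le_sum[OF that, of "\<lambda>s. \<bar>cdf N s - cdf M s\<bar> + \<bar>measure N {..<s} - measure M {..<s}\<bar>"]
      \<open>finite T\<close> unfolding E_def by auto
  have E_nonneg: "0 \<le> E" unfolding E_def by (intro sum_nonneg) auto
  have grid: "0 < j / k" "j / k < 1" "quantile M (j / k) \<in> T" if "j \<in> {1..<k}" for j
    using that by (auto simp: T_def)
  have h: "0 \<le> cdf M t" "cdf M t \<le> 1" and F: "0 \<le> cdf N t" "cdf N t \<le> 1"
    by (simp_all add: cdf_nonneg cdf_bounded_prob N.cdf_nonneg N.cdf_bounded_prob)
  have "cdf N t \<le> cdf M t + 1 / k + E"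
  proof (cases "cdf M t < 1 - 1 / k")
    case True
    then obtain j where "j \<in> {1..<k}" "cdf M t < j / k" "j / k \<le> cdf M t + 1 / k"
      using grid_point_above assms h by blast
    then show ?thesis
      using cdf_le_via_quantile[OF N grid(1,2)] E(2)[OF grid(3)] by fastforce
  qed (use F E_nonneg in auto)
  moreover have "cdf M t - 1 / k - E \<le> cdf N t"
  proof (cases "1 / k < cdf M t")
    case True
    then obtain j where "j \<in> {1..<k}" "j / k \<le> cdf M t" "cdf M t \<le> j / k + 1 / k"
      using grid_point_below assms h by blast
    then show ?thesis
      using cdf_ge_via_quantile[OF N grid(1,2)] E(1)[OF grid(3)] by fastforce
  qed (use F E_nonneg in auto)
  ultimately show "\<bar>cdf N t - cdf M t\<bar> \<le> 1 / k + E" by linarith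
qed

section \<open>The posterior base measure\<close>

lemma real_distribution_return: "real_distribution (return borel (x :: real))"
  by (simp add: real_distribution_def real_distribution_axioms_def prob_space_return)

lemma post_base_eq:
  "post_base K G x n A = (K * measure G A + (\<Sum>i<n. indicator A (x i))) / (K + real n)"
proof -
  have "(\<Sum>i<n. indicator A (x i) :: real) = real (card ({..<n} \<inter> {i. x i \<in> A}))"
    by (simp add: indicator_def sum_of_bool_eq[symmetric] of_bool_def)
  also have "{..<n} \<inter> {i. x i \<in> A} = {i \<in> {..<n}. x i \<in> A}" by auto
  finally show ?thesis by (simp add: post_base_def)
qed

lemma post_base_nonneg: "K \<ge> 0 \<Longrightarrow> 0 \<le> post_base K G x n A"
  by (simp add: post_base_def)

lemma post_base_add_compl:
  assumes "K > 0" "prob_space G" "sets G = sets borel" "A \<in> sets borel"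
  shows "post_base K G x n A + post_base K G x n (- A) = 1"
proof -
  interpret G: prob_space G by fact
  have "measure G A + measure G (- A) = 1"
    using assms G.prob_compl[of A] sets_eq_imp_space_eq[of G borel] by (simp add: Compl_eq_Diff_UNIV)
  moreover have "(\<Sum>i<n. indicator A (x i)) + (\<Sum>i<n. indicator (- A) (x i)) = (\<Sum>i<n. 1 :: real)"
    by (subst sum.distrib[symmetric]) (intro sum.cong, auto simp: indicator_def)
  moreover have "post_base K G x n A + post_base K G x n (- A) =
      (K * (measure G A + measure G (- A)) +
        ((\<Sum>i<n. indicator A (x i)) + (\<Sum>i<n. indicator (- A) (x i)))) / (K + real n)"
    by (simp add: post_base_eq add_divide_distrib distrib_left)
  ultimately show ?thesis using \<open>K > 0\<close> by simp
qed

lemma real_distribution_mixture: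
  fixes K :: real and G :: "real measure" and N :: "nat \<Rightarrow> real measure"
  assumes K: "K > 0" and G: "real_distribution G" and N: "\<And>i. real_distribution (N i)"
  obtains \<nu> where "real_distribution \<nu>"
    "\<And>t. cdf \<nu> t = (K * cdf G t + (\<Sum>i<n. cdf (N i) t)) / (K + real n)"
    "\<And>t. measure \<nu> {..<t} = (K * measure G {..<t} + (\<Sum>i<n. measure (N i) {..<t})) / (K + real n)"
proof
  interpret G: real_distribution G by (rule G)
  have Kn: "K + real n \<noteq> 0" using K by linarith
  have N_finite: "finite_borel_measure (N i)" for i
    using real_distribution.finite_borel_measure_M[OF N] .
  note N_cdf = finite_borel_measure.cdf_nondecreasing[OF N_finite]
    finite_borel_measure.cdf_is_right_cont[OF N_finite] finite_borel_measure.cdf_lim_at_bot[OF N_finite]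
    real_distribution.cdf_lim_at_top_prob[OF N] finite_borel_measure.cdf_at_left[OF N_finite]
  define F where "F t = (K * cdf G t + (\<Sum>i<n. cdf (N i) t)) / (K + real n)" for t
  have mono: "F s \<le> F t" if "s \<le> t" for s t
    unfolding F_def using that K
    by (intro divide_right_mono add_mono mult_left_mono sum_mono G.cdf_nondecreasing N_cdf) auto
  have right_cont: "continuous (at_right t) F" for t
    unfolding F_def using Kn by (intro continuous_intros G.cdf_is_right_cont N_cdf)
  have "(F \<longlongrightarrow> (K * 0 + (\<Sum>i<n. 0)) / (K + real n)) at_bot"
    unfolding F_def using Kn by (intro tendsto_intros G.cdf_lim_at_bot N_cdf)
  then have at_bot: "(F \<longlongrightarrow> 0) at_bot" by simp
  have "(F \<longlongrightarrow> (K * 1 + (\<Sum>i<n. 1)) / (K + real n)) at_top"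
    unfolding F_def using Kn by (intro tendsto_intros G.cdf_lim_at_top_prob N_cdf)
  then have at_top: "(F \<longlongrightarrow> 1) at_top" using Kn by simp
  define \<nu> where "\<nu> = interval_measure F"
  show \<nu>: "real_distribution \<nu>"
    unfolding \<nu>_def using mono right_cont at_bot at_top by (rule real_distribution_interval_measure)
  have cdf_\<nu>: "cdf \<nu> = F"
    unfolding \<nu>_def using mono right_cont at_bot by (rule cdf_interval_measure)
  then show "cdf \<nu> t = (K * cdf G t + (\<Sum>i<n. cdf (N i) t)) / (K + real n)" for t
    by (simp add: F_def)
  fix t
  have "(F \<longlongrightarrow> (K * measure G {..<t} + (\<Sum>i<n. measure (N i) {..<t})) / (K + real n)) (at_left t)"
    unfolding F_def using Kn by (intro tendsto_intros G.cdf_at_left N_cdf)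
  moreover have "(F \<longlongrightarrow> measure \<nu> {..<t}) (at_left t)"
    using finite_borel_measure.cdf_at_left[OF real_distribution.finite_borel_measure_M[OF \<nu>]]
    by (simp add: cdf_\<nu>)
  ultimately show "measure \<nu> {..<t} = (K * measure G {..<t} + (\<Sum>i<n. measure (N i) {..<t})) / (K + real n)"
    by (intro tendsto_unique[OF trivial_limit_at_left_real])
qed

text \<open>The Kolmogorov distance only sees rays, so the posterior base measure is only realised
  through its values on \<open>{..t}\<close> and \<open>{..<t}\<close>.\<close>
lemma post_base_cdf:
  assumes "K > 0" and "real_distribution G"
  obtains \<nu> where "real_distribution \<nu>" "\<And>t. cdf \<nu> t = post_base K G x n {..t}"
    "\<And>t. measure \<nu> {..<t} = post_base K G x n {..<t}"
proof -
  obtain \<nu> where \<nu>: "real_distribution \<nu>"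
    "\<And>t. cdf \<nu> t = (K * cdf G t + (\<Sum>i<n. cdf (return borel (x i)) t)) / (K + real n)"
    "\<And>t. measure \<nu> {..<t} =
      (K * measure G {..<t} + (\<Sum>i<n. measure (return borel (x i)) {..<t})) / (K + real n)"
    using real_distribution_mixture[OF assms real_distribution_return] by blast
  moreover have "cdf (return borel (x i)) t = indicator {..t} (x i)"
    "measure (return borel (x i)) {..<t} = indicator {..<t} (x i)" for i t
    by (simp_all add: cdf_def measure_return)
  ultimately show ?thesis
    using that by (simp add: post_base_eq cdf_def)
qed

lemma post_base_atMost_empirical_diff:
  assumes "K > 0" "prob_space G"
  shows "\<bar>post_base K G x n {..t} - (\<Sum>i<n. indicator {..t} (x i)) / (K + real n)\<bar> \<le> K / (K + real n)"
proof -
  have "0 \<le> measure G {..t}" "measure G {..t} \<le> 1"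
    using prob_space.prob_le_1[OF assms(2)] by auto
  then show ?thesis
    using assms(1) by (simp add: post_base_eq add_divide_distrib abs_mult mult_left_le divide_right_mono)
qed

section \<open>Kolmogorov distance\<close>

lemma real_distribution_prob_algebra:
  "\<mu> \<in> space (prob_algebra borel) \<Longrightarrow> real_distribution \<mu>"
  by (simp add: space_prob_algebra real_distribution_def real_distribution_axioms_def)

lemma abs_cdf_diff_le_1:
  assumes "real_distribution \<mu>" "real_distribution \<nu>"
  shows "\<bar>cdf \<mu> t - cdf \<nu> t\<bar> \<le> 1"
proof -
  interpret \<mu>: real_distribution \<mu> by fact
  interpret \<nu>: real_distribution \<nu> by fact
  show ?thesis
    using \<mu>.cdf_nonneg[of t] \<mu>.cdf_bounded_prob[of t] \<nu>.cdf_nonneg[of t] \<nu>.cdf_bounded_prob[of t]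
    by (simp add: abs_le_iff)
qed

lemma kolmogorov_dist_le:
  "(\<And>t. \<bar>cdf \<mu> t - cdf \<nu> t\<bar> \<le> c) \<Longrightarrow> kolmogorov_dist \<mu> \<nu> \<le> c"
  unfolding kolmogorov_dist_def cdf_def by (rule cSUP_least) auto

lemma abs_cdf_diff_le_kolmogorov_dist:
  assumes "real_distribution \<mu>" "real_distribution \<nu>"
  shows "\<bar>cdf \<mu> t - cdf \<nu> t\<bar> \<le> kolmogorov_dist \<mu> \<nu>"
proof -
  have "bdd_above (range (\<lambda>t. \<bar>cdf \<mu> t - cdf \<nu> t\<bar>))"
    using abs_cdf_diff_le_1[OF assms] by (intro bdd_aboveI[of _ 1]) auto
  then show ?thesis unfolding kolmogorov_dist_def cdf_def by (rule cSUP_upper[OF UNIV_I])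
qed

lemma kolmogorov_dist_nonneg:
  "real_distribution \<mu> \<Longrightarrow> real_distribution \<nu> \<Longrightarrow> 0 \<le> kolmogorov_dist \<mu> \<nu>"
  using abs_cdf_diff_le_kolmogorov_dist[of \<mu> \<nu> 0] by linarith

lemma kolmogorov_dist_le_1:
  "real_distribution \<mu> \<Longrightarrow> real_distribution \<nu> \<Longrightarrow> kolmogorov_dist \<mu> \<nu> \<le> 1"
  by (intro kolmogorov_dist_le abs_cdf_diff_le_1)

lemma kolmogorov_dist_eq_SUP_Rats:
  assumes \<mu>: "real_distribution \<mu>" and \<nu>: "real_distribution \<nu>"
  shows "kolmogorov_dist \<mu> \<nu> = (SUP q\<in>\<rat>. \<bar>cdf \<mu> q - cdf \<nu> q\<bar>)"
proof -
  interpret \<mu>: real_distribution \<mu> by (rule \<mu>)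
  interpret \<nu>: real_distribution \<nu> by (rule \<nu>)
  define f where "f t = \<bar>cdf \<mu> t - cdf \<nu> t\<bar>" for t
  have bdd: "bdd_above (f ` A)" for A
    using abs_cdf_diff_le_1[OF \<mu> \<nu>] by (intro bdd_aboveI[of _ 1]) (auto simp: f_def)
  have right_cont: "(f \<longlongrightarrow> f t) (at_right t)" for t
    using \<mu>.cdf_is_right_cont[of t] \<nu>.cdf_is_right_cont[of t]
    unfolding f_def continuous_within by (intro tendsto_intros)
  have "f t \<le> (SUP q\<in>\<rat>. f q)" for t
  proof (rule tendsto_upperbound[OF right_cont])
    have "f s \<le> (SUP q\<in>\<rat>. f q)" if "t < s" "s < t + 1" for s
    proof (rule field_le_epsilon)
      fix e :: real assume "e > 0"
      then obtain b where "s < b" "\<And>r. s < r \<Longrightarrow> r < b \<Longrightarrow> dist (f r) (f s) < e"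
        using right_cont[of s, THEN tendstoD] by (auto simp: eventually_at_right_field)
      moreover obtain q where "q \<in> \<rat>" "s < q" "q < b" using Rats_dense_in_real[OF \<open>s < b\<close>] by blast
      ultimately show "f s \<le> (SUP q\<in>\<rat>. f q) + e"
        using cSUP_upper[OF \<open>q \<in> \<rat>\<close> bdd] by (force simp: dist_real_def abs_less_iff)
    qed
    then show "\<forall>\<^sub>F s in at_right t. f s \<le> (SUP q\<in>\<rat>. f q)"
      by (auto simp: eventually_at_right_field intro!: exI[of _ "t + 1"])
  qed simp
  then have "(SUP t. f t) = (SUP q\<in>\<rat>. f q)"
    by (intro antisym cSUP_least cSUP_subset_mono bdd) auto
  then show ?thesis unfolding kolmogorov_dist_def f_def cdf_def by simp
qed

lemma borel_measurable_kolmogorov_dist: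
  assumes P: "P \<in> M \<rightarrow>\<^sub>M prob_algebra borel" and Q: "Q \<in> M \<rightarrow>\<^sub>M prob_algebra borel"
  shows "(\<lambda>\<omega>. kolmogorov_dist (P \<omega>) (Q \<omega>)) \<in> borel_measurable M"
proof -
  have distr: "real_distribution (P \<omega>)" "real_distribution (Q \<omega>)" if "\<omega> \<in> space M" for \<omega>
    using measurable_space[OF P that] measurable_space[OF Q that] by (auto intro: real_distribution_prob_algebra)
  have "(\<lambda>\<omega>. SUP q\<in>\<rat>. \<bar>cdf (P \<omega>) q - cdf (Q \<omega>) q\<bar>) \<in> borel_measurable M"
  proof (rule borel_measurable_cSUP[OF countable_rat])
    fix q :: real
    show "(\<lambda>\<omega>. \<bar>cdf (P \<omega>) q - cdf (Q \<omega>) q\<bar>) \<in> borel_measurable M"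
      unfolding cdf_def
      by (intro borel_measurable_abs borel_measurable_diff
          measurable_compose[OF P measurable_measure_prob_algebra]
          measurable_compose[OF Q measurable_measure_prob_algebra]) auto
  next
    fix \<omega> assume "\<omega> \<in> space M"
    then show "bdd_above ((\<lambda>q. \<bar>cdf (P \<omega>) q - cdf (Q \<omega>) q\<bar>) ` \<rat>)"
      using abs_cdf_diff_le_1[OF distr] by (intro bdd_aboveI[of _ 1]) auto
  qed
  then show ?thesis
    by (rule measurable_cong[THEN iffD1, rotated]) (simp add: kolmogorov_dist_eq_SUP_Rats distr)
qed

lemma integrable_kolmogorov_dist:
  assumes "prob_space M" "P \<in> M \<rightarrow>\<^sub>M prob_algebra borel" "Q \<in> M \<rightarrow>\<^sub>M prob_algebra borel"
  shows "integrable M (\<lambda>\<omega>. kolmogorov_dist (P \<omega>) (Q \<omega>))"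
proof -
  interpret prob_space M by fact
  have "\<bar>kolmogorov_dist (P \<omega>) (Q \<omega>)\<bar> \<le> 1" if "\<omega> \<in> space M" for \<omega>
  proof -
    have "real_distribution (P \<omega>)" "real_distribution (Q \<omega>)"
      using measurable_space[OF assms(2) that] measurable_space[OF assms(3) that]
      by (auto intro: real_distribution_prob_algebra)
    then show ?thesis using kolmogorov_dist_nonneg kolmogorov_dist_le_1 by (simp add: abs_le_iff)
  qed
  then show ?thesis
    by (intro integrable_const_bound[where B=1] AE_I2 borel_measurable_kolmogorov_dist assms) auto
qed

lemma abs_SUP_diff_le:
  fixes f g :: "'a \<Rightarrow> real"
  assumes "\<And>t. \<bar>f t - g t\<bar> \<le> c" and "bdd_above (range f)" "bdd_above (range g)"
  shows "\<bar>(SUP t. f t) - (SUP t. g t)\<bar> \<le> c"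
proof -
  have "f t \<le> (SUP t. f t)" "g t \<le> (SUP t. g t)" for t
    using assms(2,3) by (auto intro: cSUP_upper)
  then have "f t \<le> (SUP t. g t) + c" "g t \<le> (SUP t. f t) + c" for t
    using abs_le_D1[OF assms(1)[of t]] abs_le_D2[OF assms(1)[of t]] by (smt (verit))+
  then have "(SUP t. f t) \<le> (SUP t. g t) + c" "(SUP t. g t) \<le> (SUP t. f t) + c"
    by (auto intro: cSUP_least)
  then show ?thesis by (simp add: abs_le_iff)
qed

lemma empirical_cdf_bounds:
  fixes K :: real
  assumes "K \<ge> 0"
  shows "0 \<le> (\<Sum>i<n. indicator A (x i)) / (K + real n)" "(\<Sum>i<n. indicator A (x i)) / (K + real n) \<le> 1"
proof -
  have Kn: "0 \<le> K + real n" using assms by simp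
  have "(\<Sum>i<n. indicator A (x i) :: real) \<le> (\<Sum>i<n. 1)"
    by (intro sum_mono) (simp add: indicator_def)
  then show "(\<Sum>i<n. indicator A (x i)) / (K + real n) \<le> 1"
    using assms Kn by (cases "K + real n = 0") (auto simp: divide_le_eq_1)
  from Kn show "0 \<le> (\<Sum>i<n. indicator A (x i)) / (K + real n)"
    by (intro divide_nonneg_nonneg sum_nonneg) auto
qed

lemma kolmogorov_dist_Z_stat_diff_le:
  assumes K: "K > 0" and G: "prob_space G"
    and \<mu>: "real_distribution \<mu>1" "real_distribution \<mu>2"
    and \<nu>: "real_distribution \<nu>1" "real_distribution \<nu>2"
    and \<nu>_cdf: "\<And>t. cdf \<nu>1 t = post_base K G x n {..t}" "\<And>t. cdf \<nu>2 t = post_base K G y m {..t}"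
  shows "\<bar>kolmogorov_dist \<mu>1 \<mu>2 - Z_stat K x y n m\<bar> \<le>
    kolmogorov_dist \<mu>1 \<nu>1 + kolmogorov_dist \<mu>2 \<nu>2 + K / (K + real n) + K / (K + real m)"
proof -
  define E1 where "E1 t = (\<Sum>i<n. indicator {..t} (x i)) / (K + real n)" for t
  define E2 where "E2 t = (\<Sum>j<m. indicator {..t} (y j)) / (K + real m)" for t
  have "\<bar>cdf \<mu>1 t - E1 t\<bar> \<le> kolmogorov_dist \<mu>1 \<nu>1 + K / (K + real n)"
    "\<bar>cdf \<mu>2 t - E2 t\<bar> \<le> kolmogorov_dist \<mu>2 \<nu>2 + K / (K + real m)" for t
    using abs_cdf_diff_le_kolmogorov_dist[OF \<mu>(1) \<nu>(1), of t] abs_cdf_diff_le_kolmogorov_dist[OF \<mu>(2) \<nu>(2), of t]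
      post_base_atMost_empirical_diff[OF K G, of x n t] post_base_atMost_empirical_diff[OF K G, of y m t]
    unfolding E1_def E2_def \<nu>_cdf by linarith+
  then have "\<bar>\<bar>cdf \<mu>1 t - cdf \<mu>2 t\<bar> - \<bar>E1 t - E2 t\<bar>\<bar> \<le>
      kolmogorov_dist \<mu>1 \<nu>1 + kolmogorov_dist \<mu>2 \<nu>2 + K / (K + real n) + K / (K + real m)" for t
    by (smt (verit))
  moreover have "bdd_above (range (\<lambda>t. \<bar>cdf \<mu>1 t - cdf \<mu>2 t\<bar>))"
    using abs_cdf_diff_le_1[OF \<mu>] by (intro bdd_aboveI[of _ 1]) auto
  moreover have "\<bar>E1 t - E2 t\<bar> \<le> 1" for t
  proof -
    have "0 \<le> E1 t" "E1 t \<le> 1" "0 \<le> E2 t" "E2 t \<le> 1"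
      unfolding E1_def E2_def using K by (intro empirical_cdf_bounds; simp)+
    then show ?thesis by (simp add: abs_le_iff)
  qed
  then have "bdd_above (range (\<lambda>t. \<bar>E1 t - E2 t\<bar>))"
    by (intro bdd_aboveI[of _ 1]) auto
  ultimately show ?thesis
    unfolding kolmogorov_dist_def Z_stat_def E1_def E2_def cdf_def by (rule abs_SUP_diff_le)
qed

section \<open>Posterior consistency in Kolmogorov distance\<close>

lemma dirichlet_process_expected_kolmogorov_dist_le:
  fixes k :: nat
  assumes M: "prob_space M" and DP: "dirichlet_process M P \<alpha> H" and "\<alpha> > 0"
    and \<nu>: "real_distribution \<nu>" and H_atMost: "\<And>t. H {..t} = cdf \<nu> t"
    and H_lessThan: "\<And>t. H {..<t} = measure \<nu> {..<t}"
    and H_nonneg: "\<And>A. A \<in> sets borel \<Longrightarrow> 0 \<le> H A"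
    and H_compl: "\<And>A. A \<in> sets borel \<Longrightarrow> H A + H (- A) = 1"
    and "k > 0" and \<epsilon>: "0 < \<epsilon>" "\<epsilon> \<le> 1/4"
  shows "(\<integral>\<omega>. kolmogorov_dist (P \<omega>) \<nu> \<partial>M) \<le> 1 / k + 2 * real k * (1 / (\<epsilon>\<^sup>2 * \<alpha>) + 2 * \<epsilon>)"
proof -
  interpret M: prob_space M by (rule M)
  interpret \<nu>: real_distribution \<nu> by (rule \<nu>)
  define \<delta> where "\<delta> = 1 / (\<epsilon>\<^sup>2 * \<alpha>) + 2 * \<epsilon>"
  define dev where "dev A \<omega> = \<bar>measure (P \<omega>) A - H A\<bar>" for A \<omega>
  have dev_integrable: "integrable M (dev A)" and dev_le: "integral\<^sup>L M (dev A) \<le> \<delta>"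
    if A: "A \<in> sets borel" for A
    using dirichlet_process_expected_deviation[OF DP \<open>\<alpha> > 0\<close> A H_nonneg[OF A]
        H_nonneg[OF borel_comp[OF A]] H_compl[OF A] \<epsilon>]
    unfolding dev_def \<delta>_def by auto
  obtain T where T: "finite T" "card T \<le> k" and bracket: "\<And>N t. real_distribution N \<Longrightarrow>
      \<bar>cdf N t - cdf \<nu> t\<bar> \<le> 1 / k + (\<Sum>s\<in>T. \<bar>cdf N s - cdf \<nu> s\<bar> + \<bar>measure N {..<s} - measure \<nu> {..<s}\<bar>)"
    using \<nu>.cdf_bracketing[OF \<open>k > 0\<close>] by blast
  define S where "S \<omega> = (\<Sum>s\<in>T. dev {..s} \<omega> + dev {..<s} \<omega>)" for \<omega>
  have S_integrable: "integrable M S"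
    unfolding S_def by (intro Bochner_Integration.integrable_sum Bochner_Integration.integrable_add
        dev_integrable) auto
  have "integral\<^sup>L M S = (\<Sum>s\<in>T. integral\<^sup>L M (\<lambda>\<omega>. dev {..s} \<omega> + dev {..<s} \<omega>))"
    unfolding S_def by (intro Bochner_Integration.integral_sum Bochner_Integration.integrable_add
        dev_integrable) auto
  also have "\<dots> = (\<Sum>s\<in>T. integral\<^sup>L M (dev {..s}) + integral\<^sup>L M (dev {..<s}))"
    by (rule sum.cong[OF refl], rule Bochner_Integration.integral_add)
      (simp_all add: dev_integrable)
  also have "\<dots> \<le> (\<Sum>s\<in>T. \<delta> + \<delta>)"
    by (intro sum_mono add_mono dev_le atMost_borel lessThan_borel)
  also have "\<dots> = 2 * real (card T) * \<delta>" by simp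
  also have "\<dots> \<le> 2 * real k * \<delta>"
    using T \<epsilon> \<open>\<alpha> > 0\<close> by (intro mult_right_mono) (simp_all add: \<delta>_def)
  finally have S_le: "integral\<^sup>L M S \<le> 2 * real k * \<delta>" .
  have pointwise: "kolmogorov_dist (P \<omega>) \<nu> \<le> 1 / k + S \<omega>" if "\<omega> \<in> space M" for \<omega>
  proof (rule kolmogorov_dist_le)
    fix t
    have "real_distribution (P \<omega>)"
      using measurable_space[OF dirichlet_process_measurable[OF DP] that]
      by (rule real_distribution_prob_algebra)
    from bracket[OF this, of t] show "\<bar>cdf (P \<omega>) t - cdf \<nu> t\<bar> \<le> 1 / k + S \<omega>"
      by (simp add: S_def dev_def cdf_def H_atMost H_lessThan)
  qed
  have "\<nu> \<in> space (prob_algebra borel)"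
    by (simp add: space_prob_algebra \<nu>.events_eq_borel \<nu>.prob_space_axioms)
  then have "integrable M (\<lambda>\<omega>. kolmogorov_dist (P \<omega>) \<nu>)"
    by (intro integrable_kolmogorov_dist M dirichlet_process_measurable[OF DP] measurable_const)
  then have "(\<integral>\<omega>. kolmogorov_dist (P \<omega>) \<nu> \<partial>M) \<le> (\<integral>\<omega>. 1 / k + S \<omega> \<partial>M)"
    using S_integrable pointwise by (intro integral_mono) auto
  also have "\<dots> = 1 / k + integral\<^sup>L M S"
    using S_integrable by (simp add: M.prob_space)
  finally show ?thesis using S_le unfolding \<delta>_def by linarith
qed

lemma bracketing_bound_less:
  fixes e :: real
  assumes "e > 0"
  obtains k :: nat and \<epsilon> \<alpha>0 where "k > 0" "0 < \<epsilon>" "\<epsilon> \<le> 1/4"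
    "\<And>\<alpha>. \<alpha> \<ge> \<alpha>0 \<Longrightarrow> 1 / k + 2 * real k * (1 / (\<epsilon>\<^sup>2 * \<alpha>) + 2 * \<epsilon>) < e"
proof
  define k where "k = nat \<lceil>4 / e\<rceil> + 1"
  define \<epsilon> where "\<epsilon> = min (1/4) (e / (16 * k))"
  show k: "k > 0" by (simp add: k_def)
  then show \<epsilon>: "0 < \<epsilon>" "\<epsilon> \<le> 1/4"
    using assms by (simp_all add: \<epsilon>_def)
  have "4 / e < k" unfolding k_def by linarith
  then have k_term: "1 / k < e / 4" using assms k by (simp add: field_simps)
  have \<epsilon>_term: "4 * real k * \<epsilon> \<le> e / 4"
    using k assms unfolding \<epsilon>_def by (simp add: min_def field_simps)
  fix \<alpha> assume \<alpha>: "\<alpha> \<ge> 8 * real k / (\<epsilon>\<^sup>2 * e)"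
  have "0 < 8 * real k / (\<epsilon>\<^sup>2 * e)" using k \<epsilon> assms by simp
  then have "2 * real k / (\<epsilon>\<^sup>2 * \<alpha>) \<le> 2 * real k / (\<epsilon>\<^sup>2 * (8 * real k / (\<epsilon>\<^sup>2 * e)))"
    using \<epsilon> \<alpha> by (intro divide_left_mono mult_left_mono mult_pos_pos) auto
  also have "\<dots> = e / 4" using k \<epsilon> assms by (simp add: field_simps)
  finally have \<alpha>_term: "2 * real k / (\<epsilon>\<^sup>2 * \<alpha>) \<le> e / 4" .
  have "1 / k + 2 * real k * (1 / (\<epsilon>\<^sup>2 * \<alpha>) + 2 * \<epsilon>) = 1 / k + (2 * real k / (\<epsilon>\<^sup>2 * \<alpha>) + 4 * real k * \<epsilon>)"
    by (simp add: algebra_simps)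
  also have "\<dots> < e / 4 + (e / 4 + e / 4)"
    using k_term \<alpha>_term \<epsilon>_term by (intro add_less_le_mono add_mono)
  also have "\<dots> < e" using assms by simp
  finally show "1 / k + 2 * real k * (1 / (\<epsilon>\<^sup>2 * \<alpha>) + 2 * \<epsilon>) < e" .
qed

lemma expected_kolmogorov_dist_Z_stat_diff_le:
  assumes M: "prob_space M"
    and P: "P1 \<in> M \<rightarrow>\<^sub>M prob_algebra borel" "P2 \<in> M \<rightarrow>\<^sub>M prob_algebra borel"
    and K: "K > 0" and G: "prob_space G"
    and \<nu>: "real_distribution \<nu>1" "real_distribution \<nu>2"
    and \<nu>_cdf: "\<And>t. cdf \<nu>1 t = post_base K G x n {..t}" "\<And>t. cdf \<nu>2 t = post_base K G y m {..t}"
  shows "\<bar>(\<integral>\<omega>. kolmogorov_dist (P1 \<omega>) (P2 \<omega>) \<partial>M) - Z_stat K x y n m\<bar> \<le>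
    (\<integral>\<omega>. kolmogorov_dist (P1 \<omega>) \<nu>1 \<partial>M) + (\<integral>\<omega>. kolmogorov_dist (P2 \<omega>) \<nu>2 \<partial>M) +
    K / (K + real n) + K / (K + real m)"
proof -
  interpret M: prob_space M by (rule M)
  have \<nu>_space: "\<nu>1 \<in> space (prob_algebra borel)" "\<nu>2 \<in> space (prob_algebra borel)"
    using \<nu> by (simp_all add: space_prob_algebra real_distribution_def real_distribution_axioms_def)
  note integrable = integrable_kolmogorov_dist[OF M P(1) P(2)]
    integrable_kolmogorov_dist[OF M P(1) measurable_const[OF \<nu>_space(1)]]
    integrable_kolmogorov_dist[OF M P(2) measurable_const[OF \<nu>_space(2)]]
  define c where "c = K / (K + real n) + K / (K + real m)"
  have "\<bar>kolmogorov_dist (P1 \<omega>) (P2 \<omega>) - Z_stat K x y n m\<bar> \<le>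
      kolmogorov_dist (P1 \<omega>) \<nu>1 + kolmogorov_dist (P2 \<omega>) \<nu>2 + c" if "\<omega> \<in> space M" for \<omega>
    using kolmogorov_dist_Z_stat_diff_le[OF K G _ _ \<nu> \<nu>_cdf] measurable_space[OF P(1) that]
      measurable_space[OF P(2) that]
    by (simp add: c_def add.assoc real_distribution_prob_algebra)
  then have "(\<integral>\<omega>. \<bar>kolmogorov_dist (P1 \<omega>) (P2 \<omega>) - Z_stat K x y n m\<bar> \<partial>M) \<le>
      (\<integral>\<omega>. kolmogorov_dist (P1 \<omega>) \<nu>1 + kolmogorov_dist (P2 \<omega>) \<nu>2 + c \<partial>M)"
    using integrable by (intro integral_mono) auto
  moreover have "\<bar>(\<integral>\<omega>. kolmogorov_dist (P1 \<omega>) (P2 \<omega>) \<partial>M) - Z_stat K x y n m\<bar> \<le>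
      (\<integral>\<omega>. \<bar>kolmogorov_dist (P1 \<omega>) (P2 \<omega>) - Z_stat K x y n m\<bar> \<partial>M)"
    using integral_abs_bound[of M "\<lambda>\<omega>. kolmogorov_dist (P1 \<omega>) (P2 \<omega>) - Z_stat K x y n m"] integrable(1)
    by (simp add: M.prob_space)
  ultimately show ?thesis
    using integrable by (simp add: M.prob_space c_def add.assoc)
qed

lemma posterior_expected_kolmogorov_dist_le:
  fixes k :: nat
  assumes K: "K > 0" and G: "real_distribution G" and M: "prob_space M"
    and DP: "dirichlet_process M P (K + real n) (post_base K G x n)"
    and k: "k > 0" and \<epsilon>: "0 < \<epsilon>" "\<epsilon> \<le> 1/4"
  obtains \<nu> where "real_distribution \<nu>" "\<And>t. cdf \<nu> t = post_base K G x n {..t}"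
    "(\<integral>\<omega>. kolmogorov_dist (P \<omega>) \<nu> \<partial>M) \<le> 1 / k + 2 * real k * (1 / (\<epsilon>\<^sup>2 * (K + real n)) + 2 * \<epsilon>)"
proof -
  interpret G: real_distribution G by (rule G)
  obtain \<nu> where \<nu>: "real_distribution \<nu>" "\<And>t. cdf \<nu> t = post_base K G x n {..t}"
    "\<And>t. measure \<nu> {..<t} = post_base K G x n {..<t}"
    using post_base_cdf[OF K G] by blast
  have "(\<integral>\<omega>. kolmogorov_dist (P \<omega>) \<nu> \<partial>M) \<le> 1 / k + 2 * real k * (1 / (\<epsilon>\<^sup>2 * (K + real n)) + 2 * \<epsilon>)"
    using K k \<epsilon>
    by (intro dirichlet_process_expected_kolmogorov_dist_le[OF M DP _ \<nu>(1)])
      (simp_all add: \<nu>(2,3) post_base_nonneg post_base_add_compl G.prob_space_axioms G.events_eq_borel)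
  with \<nu> that show ?thesis by blast
qed

lemma prior_weight_tendsto_0: "(\<lambda>n. K / (K + real n)) \<longlonglongrightarrow> 0"
  by (intro tendsto_divide_0[OF tendsto_const] filterlim_at_top_imp_at_infinity
      filterlim_tendsto_add_at_top[OF tendsto_const filterlim_real_sequentially])

lemma expected_kolmogorov_dist_Z_stat_diff_small:
  fixes K e :: real and G :: "real measure" and x y :: "nat \<Rightarrow> real"
  assumes K: "K > 0" and G: "real_distribution G" and "e > 0"
  shows "\<exists>N. \<forall>n\<ge>N. \<forall>m\<ge>N. \<forall>(M :: 'a measure) P1 P2. prob_space M \<longrightarrow>
    dirichlet_process M P1 (K + real n) (post_base K G x n) \<longrightarrow>
    dirichlet_process M P2 (K + real m) (post_base K G y m) \<longrightarrow>
    \<bar>(\<integral>\<omega>. kolmogorov_dist (P1 \<omega>) (P2 \<omega>) \<partial>M) - Z_stat K x y n m\<bar> < e"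
proof -
  interpret G: real_distribution G by (rule G)
  obtain k :: nat and \<epsilon> \<alpha>0 where k: "k > 0" and \<epsilon>: "0 < \<epsilon>" "\<epsilon> \<le> 1/4"
    and small: "\<And>\<alpha>. \<alpha> \<ge> \<alpha>0 \<Longrightarrow> 1 / k + 2 * real k * (1 / (\<epsilon>\<^sup>2 * \<alpha>) + 2 * \<epsilon>) < e / 4"
    using bracketing_bound_less[of "e / 4"] \<open>e > 0\<close> by auto
  have "\<forall>\<^sub>F n in sequentially. \<alpha>0 \<le> K + real n \<and> K / (K + real n) < e / 4"
    using filterlim_tendsto_add_at_top[OF tendsto_const filterlim_real_sequentially, of K]
      order_tendstoD(2)[OF prior_weight_tendsto_0, of "e / 4"] \<open>e > 0\<close>
    by (auto simp: filterlim_at_top intro: eventually_conj)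
  then obtain N where N: "\<alpha>0 \<le> K + real n" "K / (K + real n) < e / 4" if "N \<le> n" for n
    by (auto simp: eventually_sequentially)
  have posterior: "\<exists>\<nu>. real_distribution \<nu> \<and> (\<forall>t. cdf \<nu> t = post_base K G z n {..t}) \<and>
      (\<integral>\<omega>. kolmogorov_dist (P \<omega>) \<nu> \<partial>M) < e / 4"
    if "N \<le> n" "prob_space M" "dirichlet_process M P (K + real n) (post_base K G z n)"
    for n z and M :: "'a measure" and P
    using posterior_expected_kolmogorov_dist_le[OF K G that(2,3) k \<epsilon>] small[OF N(1)[OF that(1)]]
    by (metis order.strict_trans1)
  show ?thesis
  proof (intro exI[of _ N] allI impI)
    fix n m :: nat and M :: "'a measure" and P1 P2
    assume n: "N \<le> n" and m: "N \<le> m" and M: "prob_space M"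
      and DP1: "dirichlet_process M P1 (K + real n) (post_base K G x n)"
      and DP2: "dirichlet_process M P2 (K + real m) (post_base K G y m)"
    obtain \<nu>1 where \<nu>1: "real_distribution \<nu>1" "\<And>t. cdf \<nu>1 t = post_base K G x n {..t}"
      "(\<integral>\<omega>. kolmogorov_dist (P1 \<omega>) \<nu>1 \<partial>M) < e / 4"
      using posterior[OF n M DP1] by blast
    obtain \<nu>2 where \<nu>2: "real_distribution \<nu>2" "\<And>t. cdf \<nu>2 t = post_base K G y m {..t}"
      "(\<integral>\<omega>. kolmogorov_dist (P2 \<omega>) \<nu>2 \<partial>M) < e / 4"
      using posterior[OF m M DP2] by blast
    show "\<bar>(\<integral>\<omega>. kolmogorov_dist (P1 \<omega>) (P2 \<omega>) \<partial>M) - Z_stat K x y n m\<bar> < e"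
      using expected_kolmogorov_dist_Z_stat_diff_le[OF M dirichlet_process_measurable[OF DP1]
          dirichlet_process_measurable[OF DP2] K G.prob_space_axioms \<nu>1(1) \<nu>2(1) \<nu>1(2) \<nu>2(2)]
        \<nu>1(3) \<nu>2(3) N(2)[OF n] N(2)[OF m]
      by linarith
  qed
qed

theorem theorem6:
  fixes K :: real and G :: "real measure" and x y :: "nat \<Rightarrow> real"
  assumes K_pos: "K > 0"
    and G_prob: "prob_space G" and G_sets: "sets G = sets borel"
    and G_dom: "\<exists>(\<nu>1 :: real measure) f C. C > 0 \<and> sets \<nu>1 = sets borel \<and>
                  f \<in> borel_measurable borel \<and> (\<forall>t. 0 \<le> f t \<and> f t \<le> C) \<and>
                  G = density \<nu>1 (\<lambda>t. ennreal (f t))"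
  shows "\<forall>e>0. \<exists>N. \<forall>n\<ge>N. \<forall>m\<ge>N. \<forall>(M :: 'a measure) P1 P2.
           prob_space M \<longrightarrow>
           dirichlet_process M P1 (K + real n) (post_base K G x n) \<longrightarrow>
           dirichlet_process M P2 (K + real m) (post_base K G y m) \<longrightarrow>
           prob_space.indep_var M (prob_algebra borel) P1 (prob_algebra borel) P2 \<longrightarrow>
           \<bar>(\<integral>\<omega>. kolmogorov_dist (P1 \<omega>) (P2 \<omega>) \<partial>M) - Z_stat K x y n m\<bar> < e"
proof -
  have "real_distribution G"
    using G_prob G_sets by (simp add: real_distribution_def real_distribution_axioms_def)
  from expected_kolmogorov_dist_Z_stat_diff_small[OF K_pos this] show ?thesis by blast
qed

end
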